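(* Let $P=[\alpha^1,\dots,\alpha^d,I]$ be a tile and let $q\in\mathcal{Q}_{d-1}$ with $q(x_I^j)\in\alpha^j$ for all $j\in\{1,\dots,d\}$. Then $$\|q-q_P\|_{L^\infty(\tilde I)}\le c(d)\,|I|^{-1},$$ where $c(d)$ depends only on $d$.
   Context: Fix $d\in\mathbb{N}$. $\mathcal{Q}_{d-1}$ is the class of real polynomials of degree $\le d-1$. A tile is a $(d+1)$-tuple $P=[\alpha^1,\dots,\alpha^d,I]$ of dyadic half-open intervals, $I$ a dyadic subinterval of $[0,1]$ and $\alpha^j$ dyadic intervals of $\mathbb{R}$, with $|\alpha^j|=|I|^{-1}$. For dyadic $I$, the points $x_I^1,\dots,x_I^d$ are: $x_I^1,x_I^2$ the endpoints of $I$, $x_I^3=\frac{x_I^1+x_I^2}{2}$, $x_I^4=\frac{x_I^1+x_I^3}{2}$, $x_I^5=\frac{x_I^3+x_I^2}{2}$, and so on inductively (successive dyadic midpoints, generation by generation, left to right) until $d$ distinct points are obtained. The central polynomial $q_P\in\mathcal{Q}_{d-1}$ is the Lagrange interpolation polynomial with $q_P(x_I^j)=c(\alpha^j)$ (the center of $\alpha^j$) for all $j$, i.e. $q_P(y)=\sum_{j=1}^d\frac{\prod_{k\ne j}(y-x_I^k)}{\prod_{k\ne j}(x_I^j-x_I^k)}c(\alpha^j)$. $\tilde I=13I$ is the interval with the same center as $I$ and length $13|I|$. *)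

theory Defs
  imports "HOL-Analysis.Analysis" "HOL-Computational_Algebra.Polynomial"
begin

definition dyad :: "int \<Rightarrow> int \<Rightarrow> real set" where
  "dyad k m = {of_int m * 2 powr of_int k ..< (of_int m + 1) * 2 powr of_int k}"

definition dyad_center :: "int \<Rightarrow> int \<Rightarrow> real" where
  "dyad_center k m = (of_int m + 1/2) * 2 powr of_int k"

text \<open>Normalized dyadic points on [0,1]: t_1 = 0, t_2 = 1, t_3 = 1/2, t_4 = 1/4, t_5 = 3/4,
  t_6 = 1/8, ... (successive dyadic midpoints, generation by generation, left to right).\<close>
definition dyad_pt :: "nat \<Rightarrow> real" where
  "dyad_pt j = (if j \<le> 1 then 0 else if j = 2 then 1 else
     (let g = nat \<lfloor>log 2 (real (j - 2))\<rfloor>; r = (j - 2) - 2 ^ g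
      in (2 * real r + 1) / 2 ^ (g + 1)))"

text \<open>The points x_I^j for the dyadic interval I = [m 2^(-k), (m+1) 2^(-k)).\<close>
definition xI :: "nat \<Rightarrow> int \<Rightarrow> nat \<Rightarrow> real" where
  "xI k m j = (of_int m + dyad_pt j) / 2 ^ k"

text \<open>Central polynomial of the tile [alpha^1..alpha^d, I], I = dyad (-k) m,
  alpha^j = dyad k (n j): Lagrange interpolant with values c(alpha^j) at x_I^j.\<close>
definition central_poly :: "nat \<Rightarrow> nat \<Rightarrow> int \<Rightarrow> (nat \<Rightarrow> int) \<Rightarrow> real \<Rightarrow> real" where
  "central_poly d k m n y =
     (\<Sum>j\<in>{1..d}. (\<Prod>i\<in>{1..d}-{j}. (y - xI k m i)) / (\<Prod>i\<in>{1..d}-{j}. (xI k m j - xI k m i))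
                   * dyad_center (int k) (n j))"

end

theory Submission
  imports Defs
begin

text \<open>Both \<open>q\<close> and \<open>q\<^sub>P\<close> are determined by their values at the \<open>d\<close> distinct nodes
  \<open>x\<^sub>I\<^sup>j\<close>, so their difference is the Lagrange interpolant of the errors
  \<open>q(x\<^sub>I\<^sup>j) - c(\<alpha>\<^sup>j)\<close>, each at most \<open>|\<alpha>\<^sup>j|/2 = |I|\<^sup>-\<^sup>1/2\<close> in absolute value. Rescaling \<open>I\<close> to
  \<open>[0,1]\<close> leaves the Lagrange basis polynomials unchanged, so on \<open>13I\<close> they are bounded by
  constants depending only on the normalised nodes, i.e. only on \<open>d\<close>.\<close>

lemma odd_mult_pow2_eq_imp_eq:
  fixes a b :: nat
  assumes "odd a" "odd b" "a * 2 ^ m = b * 2 ^ n"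
  shows "m = n"
proof -
  have one_side: "m = n" if "odd a" "a * 2 ^ m = b * 2 ^ n" "m \<le> n" for a b m n :: nat
  proof -
    have "a * 2 ^ m = (b * 2 ^ (n - m)) * 2 ^ m"
      using that by (simp add: power_add[symmetric])
    then have "a = b * 2 ^ (n - m)" by simp
    with \<open>odd a\<close> have "n - m = 0" by (cases "n - m") auto
    with \<open>m \<le> n\<close> show ?thesis by simp
  qed
  show ?thesis
    using one_side[of a m b n] one_side[of b n a m] assms by linarith
qed

lemma dyad_pt_eq_odd_div_pow2:
  assumes "j \<ge> 3"
  obtains g r where "r < 2 ^ g" "j = 2 ^ g + r + 2" "dyad_pt j = (2 * real r + 1) / 2 ^ (g + 1)"
proof -
  define g where "g = nat \<lfloor>log 2 (real (j - 2))\<rfloor>"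
  have pos: "j - 2 > 0" using assms by simp
  have "\<lfloor>log (real (2::nat)) (real (j - 2))\<rfloor> = int g"
    unfolding g_def using pos by simp
  then have "2 ^ g \<le> j - 2" "j - 2 < 2 ^ (g + 1)"
    using floor_log_nat_eq_powr_iff[of 2 "j - 2" g] pos by simp_all
  moreover have "dyad_pt j = (2 * real (j - 2 - 2 ^ g) + 1) / 2 ^ (g + 1)"
    using assms unfolding dyad_pt_def g_def Let_def by simp
  ultimately show ?thesis
    using that[of "j - 2 - 2 ^ g" g] assms by simp
qed

lemma dyad_pt_strictly_between:
  assumes "j \<ge> 3"
  shows "0 < dyad_pt j" "dyad_pt j < 1"
proof -
  obtain g r where "r < 2 ^ g" "dyad_pt j = (2 * real r + 1) / 2 ^ (g + 1)"
    using dyad_pt_eq_odd_div_pow2[OF assms] by blast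
  moreover have "2 * real r + 1 < 2 ^ (g + 1)"
  proof -
    have "real (r + 1) \<le> real (2 ^ g)"
      using \<open>r < 2 ^ g\<close> by (simp only: of_nat_le_iff)
    then show ?thesis by simp
  qed
  moreover have "(0::real) < 2 ^ (g + 1)" by simp
  ultimately show "0 < dyad_pt j" "dyad_pt j < 1"
    by (simp_all only: divide_pos_pos divide_less_eq_1_pos)
qed

lemma dyad_pt_inj: "inj_on dyad_pt {1..}"
proof (rule inj_onI)
  fix a b :: nat
  assume a: "a \<in> {1..}" and b: "b \<in> {1..}" and eq: "dyad_pt a = dyad_pt b"
  have small: "dyad_pt 1 = 0" "dyad_pt 2 = 1" by (simp_all add: dyad_pt_def)
  consider "a \<ge> 3" "b \<ge> 3" | "a < 3" "b < 3" | "(a \<ge> 3) \<noteq> (b \<ge> 3)" by linarith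
  then show "a = b"
  proof cases
    case 1
    obtain g r where r: "a = 2 ^ g + r + 2" "dyad_pt a = (2 * real r + 1) / 2 ^ (g + 1)"
      using dyad_pt_eq_odd_div_pow2[OF \<open>a \<ge> 3\<close>] by metis
    obtain g' r' where r': "b = 2 ^ g' + r' + 2" "dyad_pt b = (2 * real r' + 1) / 2 ^ (g' + 1)"
      using dyad_pt_eq_odd_div_pow2[OF \<open>b \<ge> 3\<close>] by metis
    have "(2 * real r + 1) / 2 ^ (g + 1) = (2 * real r' + 1) / 2 ^ (g' + 1)"
      using eq r r' by simp
    then have "(2 * real r + 1) * 2 ^ (g' + 1) = (2 * real r' + 1) * 2 ^ (g + 1)"
      by (subst (asm) frac_eq_eq) auto
    then have "real ((2 * r + 1) * 2 ^ (g' + 1)) = real ((2 * r' + 1) * 2 ^ (g + 1))"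
      by (simp only: of_nat_mult of_nat_add of_nat_power of_nat_numeral of_nat_1)
    then have odd_eq: "(2 * r + 1) * 2 ^ (g' + 1) = (2 * r' + 1) * 2 ^ (g + 1)"
      by (simp only: of_nat_eq_iff)
    then have "g' + 1 = g + 1" by (rule odd_mult_pow2_eq_imp_eq[rotated 2]) simp_all
    with odd_eq have "r = r'" by simp
    with \<open>g' + 1 = g + 1\<close> r r' show ?thesis by simp
  next
    case 2
    then have "a \<in> {1, 2}" "b \<in> {1, 2}" using a b by auto
    with eq small show ?thesis by auto
  next
    case 3
    have "dyad_pt c \<in> {0, 1}" if "c \<in> {1..}" "c < 3" for c
    proof -
      have "c \<in> {1, 2}" using that by auto
      with small show ?thesis by auto
    qed
    from this[OF a] this[OF b] 3 eq show ?thesis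
      using dyad_pt_strictly_between[of a] dyad_pt_strictly_between[of b] by (cases "a \<ge> 3") auto
  qed
qed

definition lagrange_basis :: "('b \<Rightarrow> 'a::field) \<Rightarrow> 'b set \<Rightarrow> 'b \<Rightarrow> 'a \<Rightarrow> 'a" where
  "lagrange_basis x D j y = (\<Prod>i\<in>D-{j}. (y - x i)) / (\<Prod>i\<in>D-{j}. (x j - x i))"

lemma lagrange_basis_at_node:
  assumes "inj_on x D" "finite D" "j \<in> D" "l \<in> D"
  shows "lagrange_basis x D j (x l) = (if j = l then 1 else 0)"
proof (cases "j = l")
  case True
  have "(\<Prod>i\<in>D-{l}. (x l - x i)) \<noteq> 0"
    using assms by (auto simp: inj_on_eq_iff)
  with True show ?thesis by (simp add: lagrange_basis_def)
next
  case False
  then have "(\<Prod>i\<in>D-{j}. (x l - x i)) = 0"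
    using assms by (intro prod_zero) (auto intro!: bexI[of _ l])
  with False show ?thesis by (simp add: lagrange_basis_def)
qed

lemma poly_eq_lagrange_interpolant:
  fixes x :: "'b \<Rightarrow> 'a::field" and q :: "'a poly"
  assumes inj: "inj_on x D" and fin: "finite D" and deg: "degree q < card D"
  shows "poly q y = (\<Sum>j\<in>D. lagrange_basis x D j y * poly q (x j))"
proof -
  define p where "p = (\<Sum>j\<in>D. smult (poly q (x j) / (\<Prod>i\<in>D-{j}. (x j - x i)))
                                   (\<Prod>i\<in>D-{j}. [:- x i, 1:]))"
  have poly_p: "poly p z = (\<Sum>j\<in>D. lagrange_basis x D j z * poly q (x j))" for z
    unfolding p_def lagrange_basis_def poly_sum poly_smult poly_prod
    by (intro sum.cong) (simp_all add: mult.commute)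
  have "degree p \<le> card D - 1"
    unfolding p_def
  proof (intro degree_sum_le[OF fin] order_trans[OF degree_smult_le])
    fix j assume "j \<in> D"
    have "degree (\<Prod>i\<in>D-{j}. [:- x i, 1:]) \<le> (\<Sum>i\<in>D-{j}. degree [:- x i, 1:])"
      using degree_prod_sum_le[of "D-{j}" "\<lambda>i. [:- x i, 1:]"] fin by (simp add: o_def)
    also have "\<dots> = card D - 1" using \<open>j \<in> D\<close> fin by simp
    finally show "degree (\<Prod>i\<in>D-{j}. [:- x i, 1:]) \<le> card D - 1" .
  qed
  with deg have deg_p: "degree p < card D" by linarith
  have agree: "poly q z = poly p z" if "z \<in> x ` D" for z
  proof -
    obtain l where l: "l \<in> D" "z = x l" using \<open>z \<in> x ` D\<close> by blast
    have "poly p (x l) = (\<Sum>j\<in>D. (if j = l then poly q (x j) else 0))"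
      unfolding poly_p using lagrange_basis_at_node[OF inj fin _ l(1)] by (intro sum.cong) auto
    also have "\<dots> = poly q (x l)"
      using fin l(1) by (simp add: sum.delta')
    finally show ?thesis using l(2) by simp
  qed
  moreover have "card (x ` D) = card D"
    using inj by (rule card_image)
  ultimately have "q = p"
    using deg deg_p by (intro poly_eqI_degree[of "x ` D"]) auto
  then have "poly q y = poly p y" by simp
  also have "\<dots> = (\<Sum>j\<in>D. lagrange_basis x D j y * poly q (x j))" by (rule poly_p)
  finally show ?thesis .
qed

lemma lagrange_basis_affine:
  fixes t :: "'b \<Rightarrow> 'a::field"
  assumes "s \<noteq> 0"
  shows "lagrange_basis (\<lambda>i. (a + t i) / s) D j y = lagrange_basis t D j (s * y - a)"
proof -
  have "y - (a + t i) / s = (s * y - a - t i) / s" for i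
    using assms by (simp add: field_simps)
  moreover have "(a + t j) / s - (a + t i) / s = (t j - t i) / s" for i
    using assms by (simp add: field_simps)
  ultimately show ?thesis
    unfolding lagrange_basis_def using assms
    by (simp add: prod_dividef)
qed

lemma abs_lagrange_basis_le:
  fixes t :: "'b \<Rightarrow> real"
  assumes "\<And>i. i \<in> D - {j} \<Longrightarrow> \<bar>s - t i\<bar> \<le> R i"
  shows "\<bar>lagrange_basis t D j s\<bar> \<le> (\<Prod>i\<in>D-{j}. R i / \<bar>t j - t i\<bar>)"
proof -
  have "\<bar>lagrange_basis t D j s\<bar> = (\<Prod>i\<in>D-{j}. \<bar>s - t i\<bar> / \<bar>t j - t i\<bar>)"
    unfolding lagrange_basis_def by (simp add: abs_prod prod_dividef)
  also have "\<dots> \<le> (\<Prod>i\<in>D-{j}. R i / \<bar>t j - t i\<bar>)"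
    by (intro prod_mono conjI divide_nonneg_nonneg divide_right_mono assms) auto
  finally show ?thesis .
qed

lemma abs_sum_mult_le:
  fixes f g :: "'b \<Rightarrow> real"
  assumes "\<And>j. j \<in> A \<Longrightarrow> \<bar>f j\<bar> \<le> F j" "\<And>j. j \<in> A \<Longrightarrow> \<bar>g j\<bar> \<le> G"
  shows "\<bar>\<Sum>j\<in>A. f j * g j\<bar> \<le> (\<Sum>j\<in>A. F j) * G"
proof -
  have "\<bar>\<Sum>j\<in>A. f j * g j\<bar> \<le> (\<Sum>j\<in>A. \<bar>f j\<bar> * \<bar>g j\<bar>)"
    unfolding abs_mult[symmetric] by (rule sum_abs)
  also have "\<dots> \<le> (\<Sum>j\<in>A. F j * G)"
    by (intro sum_mono mult_mono assms order_trans[OF abs_ge_zero assms(1)] abs_ge_zero)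
  finally show ?thesis by (simp add: sum_distrib_right)
qed

lemma dist_dyad_center_le:
  assumes "v \<in> dyad k m"
  shows "\<bar>v - dyad_center k m\<bar> \<le> 2 powr k / 2"
proof -
  have "of_int m * 2 powr k \<le> v" "v < (of_int m + 1) * 2 powr k"
    using assms unfolding dyad_def by auto
  then show ?thesis
    unfolding dyad_center_def abs_le_iff by (simp add: algebra_simps)
qed

lemma central_poly_eq_lagrange:
  "central_poly d k m n y =
     (\<Sum>j\<in>{1..d}. lagrange_basis (xI k m) {1..d} j y * dyad_center (int k) (n j))"
  unfolding central_poly_def lagrange_basis_def ..

lemma xI_eq: "xI k m = (\<lambda>j. (of_int m + dyad_pt j) / 2 ^ k)"
  unfolding xI_def ..

lemma inj_on_xI: "inj_on (xI k m) {1..}"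
proof (rule inj_onI)
  fix i j assume "i \<in> {1..}" "j \<in> {1..}" "xI k m i = xI k m j"
  then show "i = j"
    using inj_onD[OF dyad_pt_inj] by (simp add: xI_def)
qed

lemma poly_minus_central_poly:
  assumes "degree q < d"
  shows "poly q y - central_poly d k m n y =
    (\<Sum>j\<in>{1..d}. lagrange_basis (xI k m) {1..d} j y * (poly q (xI k m j) - dyad_center (int k) (n j)))"
proof -
  have "inj_on (xI k m) {1..d}"
    using inj_on_xI by (rule inj_on_subset) auto
  with assms have "poly q y = (\<Sum>j\<in>{1..d}. lagrange_basis (xI k m) {1..d} j y * poly q (xI k m j))"
    by (intro poly_eq_lagrange_interpolant) simp_all
  then show ?thesis
    unfolding central_poly_eq_lagrange by (simp add: right_diff_distrib sum_subtractf)
qed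

definition lagrange_dyad_bound :: "nat \<Rightarrow> nat \<Rightarrow> real" where
  "lagrange_dyad_bound d j =
     (\<Prod>i\<in>{1..d}-{j}. (7 + \<bar>dyad_pt i\<bar>) / \<bar>dyad_pt j - dyad_pt i\<bar>)"

lemma abs_lagrange_basis_xI_le:
  assumes "\<bar>y - (of_int m + 1/2) / 2 ^ k\<bar> \<le> (13 / 2) / 2 ^ k"
  shows "\<bar>lagrange_basis (xI k m) {1..d} j y\<bar> \<le> lagrange_dyad_bound d j"
proof -
  define s where "s = 2 ^ k * y - of_int m"
  have "\<bar>s - 1/2\<bar> = 2 ^ k * \<bar>y - (of_int m + 1/2) / 2 ^ k\<bar>"
    unfolding s_def by (simp add: field_simps flip: abs_mult)
  with assms have s_near: "\<bar>s - 1/2\<bar> \<le> 13/2" by (simp add: field_simps)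
  have "lagrange_basis (xI k m) {1..d} j y = lagrange_basis dyad_pt {1..d} j s"
    unfolding xI_eq s_def by (rule lagrange_basis_affine) simp
  also have "\<bar>\<dots>\<bar> \<le> lagrange_dyad_bound d j"
    unfolding lagrange_dyad_bound_def
    by (intro abs_lagrange_basis_le[where R = "\<lambda>i. 7 + \<bar>dyad_pt i\<bar>"]) (use s_near in arith)
  finally show ?thesis .
qed

theorem lemmaC:
  fixes d :: nat
  assumes "d \<ge> 1"
  shows "\<exists>c::real. \<forall>(k::nat) (m::int) (n::nat \<Rightarrow> int) (q::real poly) (y::real).
           0 \<le> m \<and> m < 2 ^ k \<and>
           degree q \<le> d - 1 \<and>
           (\<forall>j\<in>{1..d}. poly q (xI k m j) \<in> dyad (int k) (n j)) \<and>
           \<bar>y - (of_int m + 1/2) / 2 ^ k\<bar> \<le> (13 / 2) / 2 ^ k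
           \<longrightarrow> \<bar>poly q y - central_poly d k m n y\<bar> \<le> c * 2 ^ k"
proof (intro exI[of _ "(\<Sum>j\<in>{1..d}. lagrange_dyad_bound d j) / 2"] allI impI, elim conjE)
  fix k :: nat and m :: int and n :: "nat \<Rightarrow> int" and q :: "real poly" and y :: real
  assume deg: "degree q \<le> d - 1" and mem: "\<forall>j\<in>{1..d}. poly q (xI k m j) \<in> dyad (int k) (n j)"
    and near: "\<bar>y - (of_int m + 1/2) / 2 ^ k\<bar> \<le> (13 / 2) / 2 ^ k"
  have "degree q < d" using deg assms by linarith
  have "\<bar>poly q y - central_poly d k m n y\<bar>
      \<le> (\<Sum>j\<in>{1..d}. lagrange_dyad_bound d j) * (2 ^ k / 2)"
    unfolding poly_minus_central_poly[OF \<open>degree q < d\<close>]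
  proof (rule abs_sum_mult_le)
    fix j :: nat assume "j \<in> {1..d}"
    show "\<bar>lagrange_basis (xI k m) {1..d} j y\<bar> \<le> lagrange_dyad_bound d j"
      using near by (rule abs_lagrange_basis_xI_le)
    show "\<bar>poly q (xI k m j) - dyad_center (int k) (n j)\<bar> \<le> 2 ^ k / 2"
      using dist_dyad_center_le[of "poly q (xI k m j)" "int k" "n j"] mem \<open>j \<in> {1..d}\<close>
      by (simp add: powr_realpow)
  qed
  then show "\<bar>poly q y - central_poly d k m n y\<bar> \<le> (\<Sum>j\<in>{1..d}. lagrange_dyad_bound d j) / 2 * 2 ^ k"
    by simp
qed

end
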